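(* Let $\sigma:\Sigma\to\Sigma$ be a shift of finite type. Then there exist a positive integer $m$ and a finite collection $\mathcal P$ of prototiles such that the tiling system $\sigma:T\to T$, $T=T(\mathcal P)$, satisfies: (1) $T=T_0\cup T_1\cup\dots\cup T_{m-1}$, where the sets $T_i$ are closed and cyclically permuted by the shift $\sigma$ (i.e. $\sigma(T_i)=T_{i+1}$ for $0\le i<m-1$ and $\sigma(T_{m-1})=T_0$); (2) $\sigma^m:\Sigma\to\Sigma$ is topologically conjugate to $\sigma^m:T_i\to T_i$ for every $i\in\{0,\dots,m-1\}$.
   Context: A prototile is a finite nonempty subset of $\mathbb Z$ with minimum $0$. Let $\mathcal P=\{P_1,\dots,P_K\}$ be a finite collection of prototiles. A tile is a translate $t+P_k$ ($t\in\mathbb Z$). A tiling of the integers by $\mathcal P$ is an expression of $\mathbb Z$ as a disjoint union of tiles, $\mathbb Z=\bigcup_j (t_j+P_{k_j})$. To such a tiling corresponds the point $x=(x_i)\in\{1,\dots,K\}^{\mathbb Z}$ defined by $x_i=k$ iff there is $j$ with $i\in t_j+P_{k_j}$ and $k_j=k$. $T(\mathcal P)$ denotes the set of all points corresponding to tilings of $\mathbb Z$ by $\mathcal P$; it is closed and shift-invariant, where $\sigma$ is the shift $(\sigma(x))_i=x_{i+1}$. The map $\sigma:T(\mathcal P)\to T(\mathcal P)$ is called a tiling system. *)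

theory Defs
  imports "HOL-Analysis.Analysis"
begin

definition shift_top :: "(int \<Rightarrow> 'a) topology" where
  "shift_top = product_topology (\<lambda>_. discrete_topology UNIV) UNIV"

definition shift :: "(int \<Rightarrow> 'a) \<Rightarrow> (int \<Rightarrow> 'a)" where
  "shift x = (\<lambda>i. x (i + 1))"

definition occurs_at :: "'a list \<Rightarrow> (int \<Rightarrow> 'a) \<Rightarrow> int \<Rightarrow> bool" where
  "occurs_at w x i \<longleftrightarrow> (\<forall>j < length w. x (i + int j) = w ! j)"

definition forbid_shift :: "'a list set \<Rightarrow> (int \<Rightarrow> 'a) set" where
  "forbid_shift F = {x. \<forall>w\<in>F. \<forall>i. \<not> occurs_at w x i}"

definition is_SFT :: "(int \<Rightarrow> 'a::finite) set \<Rightarrow> bool" where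
  "is_SFT S \<longleftrightarrow> (\<exists>F. finite F \<and> S = forbid_shift F)"

definition prototile :: "int set \<Rightarrow> bool" where
  "prototile A \<longleftrightarrow> finite A \<and> A \<noteq> {} \<and> Min A = 0"

definition prototile_collection :: "nat \<Rightarrow> (nat \<Rightarrow> int set) \<Rightarrow> bool" where
  "prototile_collection K P \<longleftrightarrow> K \<ge> 1 \<and> (\<forall>k\<in>{1..K}. prototile (P k))"

text \<open>A tiling is a family of tiles t + P_k, encoded as a set J of pairs (t,k),
  such that every integer lies in exactly one tile of the family (disjoint union
  covering Z). The associated point labels i with the index k of its tile.\<close>
definition tiling_points :: "nat \<Rightarrow> (nat \<Rightarrow> int set) \<Rightarrow> (int \<Rightarrow> nat) set" where
  "tiling_points K P = {x. \<exists>J :: (int \<times> nat) set.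
      (\<forall>(t, k)\<in>J. k \<in> {1..K}) \<and>
      (\<forall>i. \<exists>!(t, k). (t, k) \<in> J \<and> i \<in> (+) t ` P k) \<and>
      (\<forall>i t k. (t, k) \<in> J \<and> i \<in> (+) t ` P k \<longrightarrow> x i = k)}"

end

theory Submission
  imports Defs
begin

text \<open>
  Let \<open>L\<close> bound the lengths of the forbidden words of \<open>\<Sigma>\<close> and cut \<open>\<int>\<close> into blocks of length
  \<open>M \<ge> L\<close>. A point is determined by its windows of length \<open>M + L\<close> starting at the multiples of
  \<open>M\<close>; consecutive windows overlap in a word of length \<open>L\<close>, and the point lies in \<open>\<Sigma>\<close> iff
  every window is admissible. Each window becomes a tile: the block \<open>[0, M)\<close> with a hole whose
  position encodes the first \<open>L\<close> letters of the window, plus a peg beyond the block whose position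
  encodes the last \<open>L\<close> letters (or an unmatchable position if the window is not admissible). The
  peg of a tile must fill the hole of the next one, so the tilings are exactly the translates, by
  less than \<open>M\<close>, of the tilings built from points of \<open>\<Sigma>\<close>. The translates by \<open>i\<close> form
  \<open>T\<^sub>i\<close>, and \<open>\<sigma>\<^sup>M\<close> on \<open>\<Sigma>\<close> becomes \<open>\<sigma>\<^sup>M\<close> on each \<open>T\<^sub>i\<close>.
\<close>

lemma topspace_shift_top [simp]: "topspace (shift_top :: (int \<Rightarrow> 'a) topology) = UNIV"
  unfolding shift_top_def by (auto simp: PiE_def extensional_def)

lemma compact_space_shift_top: "compact_space (shift_top :: (int \<Rightarrow> 'a::finite) topology)"
  unfolding shift_top_def
  by (simp add: compact_space_product_topology compact_space_discrete_topology)

lemma Hausdorff_space_shift_top: "Hausdorff_space shift_top"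
  unfolding shift_top_def by (simp add: Hausdorff_space_product_topology)

lemma openin_shift_top_local:
  assumes "finite D" and "\<And>x y. x \<in> A \<Longrightarrow> (\<forall>d\<in>D. y d = x d) \<Longrightarrow> y \<in> A"
  shows "openin shift_top A"
proof -
  define cyl where "cyl x = PiE UNIV (\<lambda>d. if d \<in> D then {x d} else UNIV)" for x :: "int \<Rightarrow> 'a"
  have cyl_iff: "y \<in> cyl x \<longleftrightarrow> (\<forall>d\<in>D. y d = x d)" for x y
    by (auto simp: cyl_def PiE_UNIV_domain Pi_iff)
  have "openin shift_top (cyl x)" for x
    unfolding shift_top_def cyl_def openin_PiE_gen
    by (auto intro: finite_subset[OF _ \<open>finite D\<close>])
  moreover have "A = (\<Union>x\<in>A. cyl x)"
  proof
    show "A \<subseteq> (\<Union>x\<in>A. cyl x)"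
      by (auto simp: cyl_iff)
    show "(\<Union>x\<in>A. cyl x) \<subseteq> A"
      using assms(2) by (auto simp: cyl_iff)
  qed
  ultimately show ?thesis
    by (metis openin_Union imageE)
qed

lemma continuous_map_shift_top_local:
  assumes "\<And>n. \<exists>D. finite D \<and> (\<forall>x y. (\<forall>d\<in>D. y d = x d) \<longrightarrow> f y n = f x n)"
  shows "continuous_map shift_top shift_top f"
proof -
  have "openin shift_top {x. f x n \<in> U}" for n U
  proof -
    obtain D where D: "finite D" "\<And>x y. \<forall>d\<in>D. y d = x d \<Longrightarrow> f y n = f x n"
      using assms by blast
    show ?thesis
      by (rule openin_shift_top_local[OF D(1)]) (use D(2) in fastforce)
  qed
  then have "continuous_map shift_top (discrete_topology UNIV) (\<lambda>x. f x n)" for n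
    by (simp add: continuous_map_def)
  then show ?thesis
    by (simp add: shift_top_def continuous_map_componentwise_UNIV)
qed

lemma funpow_shift: "(shift ^^ n) x = (\<lambda>i. x (i + int n))"
  by (induction n arbitrary: x) (auto simp: shift_def algebra_simps)

lemma continuous_map_funpow_shift: "continuous_map shift_top shift_top (shift ^^ n)"
  by (rule continuous_map_shift_top_local) (auto simp: funpow_shift intro!: exI[of _ "{_ + int n}"])

lemma inj_funpow_shift: "inj (shift ^^ n)"
proof (rule injI)
  fix x y :: "int \<Rightarrow> 'a"
  assume "(shift ^^ n) x = (shift ^^ n) y"
  then have "x (i - int n + int n) = y (i - int n + int n)" for i
    unfolding funpow_shift by metis
  then show "x = y" by auto
qed

lemma closedin_shift_top_image:
  fixes X :: "(int \<Rightarrow> 'a::finite) set"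
  assumes "closedin shift_top X" and "continuous_map shift_top shift_top f"
  shows "closedin shift_top (f ` X)"
  using closedin_compact_space[OF compact_space_shift_top assms(1)]
  by (intro compactin_imp_closedin[OF Hausdorff_space_shift_top] image_compactin[OF _ assms(2)])

lemma homeomorphic_map_shift_top_image:
  fixes X :: "(int \<Rightarrow> 'a::finite) set"
  assumes "closedin shift_top X" and "continuous_map shift_top shift_top f" and "inj_on f X"
  shows "homeomorphic_map (subtopology shift_top X) (subtopology shift_top (f ` X)) f"
proof (rule continuous_imp_homeomorphic_map)
  show "continuous_map (subtopology shift_top X) (subtopology shift_top (f ` X)) f"
    using continuous_map_from_subtopology[OF assms(2)] by (auto simp: continuous_map_in_subtopology)
  show "compact_space (subtopology shift_top X)"
    by (rule compact_space_subtopology[OF closedin_compact_space[OF compact_space_shift_top assms(1)]])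
qed (use assms(3) in \<open>simp_all add: Hausdorff_space_subtopology[OF Hausdorff_space_shift_top]\<close>)

lemma shift_image_funpow_cycle:
  assumes "(shift ^^ m) ` X = X" and "\<And>x. h ((shift ^^ m) x) = (shift ^^ m) (h x)"
    and "i < m"
  shows "shift ` (shift ^^ i) ` h ` X = (shift ^^ (Suc i mod m)) ` h ` X"
proof (cases "Suc i = m")
  case True
  have "(shift ^^ m) ` h ` X = h ` (shift ^^ m) ` X"
    using assms(2) by (simp add: image_image)
  moreover have "shift ` (shift ^^ i) ` Y = (shift ^^ Suc i) ` Y" for Y :: "(int \<Rightarrow> 'b) set"
    by (simp add: image_comp)
  ultimately show ?thesis
    using True assms(1) by simp
next
  case False
  with assms(3) show ?thesis by (simp add: image_comp)
qed

lemma shift_images_cyclic_conjugate: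
  fixes X :: "(int \<Rightarrow> 'a::finite) set" and h :: "(int \<Rightarrow> 'a) \<Rightarrow> int \<Rightarrow> 'b"
  assumes "closedin shift_top X" and "(shift ^^ m) ` X = X"
    and "continuous_map shift_top shift_top h" and "inj h"
    and "\<And>x. h ((shift ^^ m) x) = (shift ^^ m) (h x)"
    and "i < m"
  shows "closedin shift_top ((shift ^^ i) ` h ` X)"
    and "shift ` (shift ^^ i) ` h ` X = (shift ^^ (Suc i mod m)) ` h ` X"
    and "\<exists>g. homeomorphic_map (subtopology shift_top X) (subtopology shift_top ((shift ^^ i) ` h ` X)) g
           \<and> (\<forall>x\<in>X. g ((shift ^^ m) x) = (shift ^^ m) (g x))"
proof -
  have g_cont: "continuous_map shift_top shift_top ((shift ^^ i) \<circ> h)"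
    by (rule continuous_map_compose[OF assms(3) continuous_map_funpow_shift])
  show "closedin shift_top ((shift ^^ i) ` h ` X)"
    using closedin_shift_top_image[OF assms(1) g_cont] by (simp add: image_comp)
  show "shift ` (shift ^^ i) ` h ` X = (shift ^^ (Suc i mod m)) ` h ` X"
    using assms(2,5,6) by (rule shift_image_funpow_cycle)
  have "homeomorphic_map (subtopology shift_top X) (subtopology shift_top ((shift ^^ i) ` h ` X))
      ((shift ^^ i) \<circ> h)"
    using homeomorphic_map_shift_top_image[OF assms(1) g_cont]
      inj_on_subset[OF inj_compose[OF inj_funpow_shift assms(4)] subset_UNIV]
    by (simp add: image_comp)
  moreover have "(shift ^^ i) (h ((shift ^^ m) x)) = (shift ^^ m) ((shift ^^ i) (h x))" for x
    by (simp only: assms(5)) (simp add: funpow_shift algebra_simps)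
  ultimately show "\<exists>g. homeomorphic_map (subtopology shift_top X)
      (subtopology shift_top ((shift ^^ i) ` h ` X)) g \<and> (\<forall>x\<in>X. g ((shift ^^ m) x) = (shift ^^ m) (g x))"
    by (intro exI[of _ "(shift ^^ i) \<circ> h"]) simp
qed

lemma translate_mem_iff: "i \<in> (+) t ` A \<longleftrightarrow> i - t \<in> (A :: int set)"
  by (simp add: image_iff) (metis add.commute diff_add_cancel add_diff_cancel_left')

lemma tiling_pointsI:
  assumes "\<And>t k. (t, k) \<in> J \<Longrightarrow> k \<in> {1..K}"
    and "\<And>i. \<exists>t k. (t, k) \<in> J \<and> i - t \<in> P k"
    and "\<And>i t k t' k'. (t, k) \<in> J \<Longrightarrow> (t', k') \<in> J \<Longrightarrow> i - t \<in> P k \<Longrightarrow> i - t' \<in> P k'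
           \<Longrightarrow> (t, k) = (t', k')"
    and "\<And>i t k. (t, k) \<in> J \<Longrightarrow> i - t \<in> P k \<Longrightarrow> x i = k"
  shows "x \<in> tiling_points K P"
  unfolding tiling_points_def
proof (intro CollectI exI[of _ J] conjI allI impI)
  show "\<forall>(t, k)\<in>J. k \<in> {1..K}"
    using assms(1) by blast
  show "\<exists>!(t, k). (t, k) \<in> J \<and> i \<in> (+) t ` P k" for i
  proof -
    obtain t k where tk: "(t, k) \<in> J" "i - t \<in> P k"
      using assms(2) by blast
    show ?thesis
      unfolding translate_mem_iff
    proof (rule ex1I[of _ "(t, k)"])
      show "\<And>p. (case p of (t, k) \<Rightarrow> (t, k) \<in> J \<and> i - t \<in> P k) \<Longrightarrow> p = (t, k)"
        using assms(3)[OF _ tk(1) _ tk(2)] by auto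
    qed (use tk in simp)
  qed
  show "x i = k" if "(t, k) \<in> J \<and> i \<in> (+) t ` P k" for i t k
    using assms(4) that unfolding translate_mem_iff by blast
qed

lemma tiling_pointsE:
  assumes "x \<in> tiling_points K P"
  obtains J where "\<And>t k. (t, k) \<in> J \<Longrightarrow> k \<in> {1..K}"
    and "\<And>i. \<exists>t k. (t, k) \<in> J \<and> i - t \<in> P k"
    and "\<And>i t k t' k'. (t, k) \<in> J \<Longrightarrow> (t', k') \<in> J \<Longrightarrow> i - t \<in> P k \<Longrightarrow> i - t' \<in> P k'
           \<Longrightarrow> (t, k) = (t', k')"
    and "\<And>i t k. (t, k) \<in> J \<Longrightarrow> i - t \<in> P k \<Longrightarrow> x i = k"
proof -
  obtain J :: "(int \<times> nat) set" where labels: "\<forall>(t, k)\<in>J. k \<in> {1..K}"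
    and unique: "\<forall>i. \<exists>!(t, k). (t, k) \<in> J \<and> i \<in> (+) t ` P k"
    and point: "\<forall>i t k. (t, k) \<in> J \<and> i \<in> (+) t ` P k \<longrightarrow> x i = k"
    using assms unfolding tiling_points_def by blast
  show ?thesis
  proof (rule that)
    show "\<exists>t k. (t, k) \<in> J \<and> i - t \<in> P k" for i
      using unique[rule_format, of i] unfolding translate_mem_iff by blast
    show "(t, k) = (t', k')"
      if "(t, k) \<in> J" "(t', k') \<in> J" "i - t \<in> P k" "i - t' \<in> P k'" for i t k t' k'
      by (rule ex1E[OF unique[rule_format, of i]]) (use that in \<open>auto simp: translate_mem_iff\<close>)
  qed (use labels point translate_mem_iff in auto)
qed

definition linked :: "nat \<Rightarrow> (nat \<Rightarrow> nat) \<Rightarrow> (nat \<Rightarrow> nat) \<Rightarrow> (int \<Rightarrow> nat) \<Rightarrow> bool" where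
  "linked K a b \<kappa> \<longleftrightarrow> (\<forall>j. \<kappa> j \<in> {1..K} \<and> b (\<kappa> j) = a (\<kappa> (j + 1)))"

lemma offset_within_two_blocks:
  fixes d r M :: int
  assumes "0 \<le> r" "r < M" "0 \<le> d * M + r" "d * M + r < 2 * M"
  shows "d = 0 \<or> d = 1"
proof -
  have "(-1) * M < d * M" "d * M < 2 * M"
    using assms by linarith+
  then have "-1 < d" "d < 2"
    using assms by (metis mult_right_less_imp_less order_le_less_trans order_less_imp_le)+
  then show ?thesis by linarith
qed

locale hole_peg_tiles =
  fixes M K :: nat and a b :: "nat \<Rightarrow> nat"
  assumes hole_bound: "a k + 4 \<le> M" and peg_bound: "b k + 4 \<le> M"
begin

definition tile :: "nat \<Rightarrow> int set" where
  "tile k = ({0..<int M} - {2 + int (a k)}) \<union> {int M + 2 + int (b k)}"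

lemma M_ge_4: "4 \<le> M"
  using hole_bound[of 0] by simp

lemma tile_low: "0 \<le> z \<Longrightarrow> z < int M \<Longrightarrow> z \<in> tile k \<longleftrightarrow> z \<noteq> 2 + int (a k)"
  unfolding tile_def by auto

lemma tile_high: "int M \<le> z \<Longrightarrow> z \<in> tile k \<longleftrightarrow> z = int M + 2 + int (b k)"
  unfolding tile_def by auto

lemma tile_bounds: "z \<in> tile k \<Longrightarrow> 0 \<le> z \<and> z < 2 * int M"
  unfolding tile_def using peg_bound[of k] by auto

lemma zero_in_tile: "0 \<in> tile k" and one_in_tile: "1 \<in> tile k"
  using tile_low M_ge_4 by auto

lemma prototile_tile: "prototile (tile k)"
proof -
  have "finite (tile k)"
    unfolding tile_def by simp
  moreover have "Min (tile k) = 0"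
    using tile_bounds zero_in_tile by (intro Min_eqI[OF \<open>finite (tile k)\<close>]) auto
  ultimately show ?thesis
    using zero_in_tile unfolding prototile_def by auto
qed

text \<open>Position \<open>m\<close> belongs to the tile of block \<open>m div M\<close>, unless it is that tile's hole, which
  is filled by the peg of the previous tile.\<close>
definition tile_index :: "(int \<Rightarrow> nat) \<Rightarrow> int \<Rightarrow> int" where
  "tile_index \<kappa> m =
     (if m mod M = 2 + int (a (\<kappa> (m div M))) then m div M - 1 else m div M)"

definition tiling_point :: "(int \<Rightarrow> nat) \<Rightarrow> int \<Rightarrow> nat" where
  "tiling_point \<kappa> m = \<kappa> (tile_index \<kappa> m)"

lemma tile_covers_iff:
  assumes "linked K a b \<kappa>"
  shows "m - j * int M \<in> tile (\<kappa> j) \<longleftrightarrow> j = tile_index \<kappa> m"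
proof -
  define q r where "q = m div M" and "r = m mod M"
  have r: "0 \<le> r" "r < int M"
    using M_ge_4 by (auto simp: r_def)
  have index: "tile_index \<kappa> m = (if r = 2 + int (a (\<kappa> q)) then q - 1 else q)"
    by (simp add: tile_index_def q_def r_def)
  have offsets: "m - q * int M = r" "m - (q - 1) * int M = int M + r"
    by (simp_all add: q_def r_def algebra_simps)
  have hole_filled: "b (\<kappa> (q - 1)) = a (\<kappa> q)"
    using assms unfolding linked_def by (metis diff_add_cancel)
  show ?thesis
  proof
    assume j: "m - j * int M \<in> tile (\<kappa> j)"
    have "m - j * int M = (q - j) * int M + r"
      by (simp add: q_def r_def algebra_simps)
    then have "q - j = 0 \<or> q - j = 1"
      using offset_within_two_blocks[OF r] tile_bounds[OF j] by metis
    then consider "j = q" | "j = q - 1"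
      by fastforce
    then show "j = tile_index \<kappa> m"
    proof cases
      case 1
      then have "r \<noteq> 2 + int (a (\<kappa> q))"
        using j offsets(1) tile_low[OF r] by simp
      then show ?thesis
        using 1 index by simp
    next
      case 2
      then have "r = 2 + int (a (\<kappa> q))"
        using j offsets(2) tile_high[of "int M + r"] r hole_filled by simp
      then show ?thesis
        using 2 index by simp
    qed
  next
    assume "j = tile_index \<kappa> m"
    then show "m - j * int M \<in> tile (\<kappa> j)"
      by (cases "r = 2 + int (a (\<kappa> q))") (simp_all add: index offsets tile_low[OF r] tile_high hole_filled)
  qed
qed

lemma tiling_point_in_tiling_points:
  assumes "linked K a b \<kappa>"
  shows "(\<lambda>n. tiling_point \<kappa> (n + c)) \<in> tiling_points K tile"
proof (rule tiling_pointsI[of "range (\<lambda>j. (j * int M - c, \<kappa> j))"])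
  have covers_iff: "n - (j * int M - c) \<in> tile (\<kappa> j) \<longleftrightarrow> j = tile_index \<kappa> (n + c)" for n j
    using tile_covers_iff[OF assms, of "n + c" j] by (simp add: algebra_simps)
  show "\<exists>t k. (t, k) \<in> range (\<lambda>j. (j * int M - c, \<kappa> j)) \<and> i - t \<in> tile k" for i
    using covers_iff by blast
  show "(t, k) = (t', k')"
    if "(t, k) \<in> range (\<lambda>j. (j * int M - c, \<kappa> j))" "(t', k') \<in> range (\<lambda>j. (j * int M - c, \<kappa> j))"
      "i - t \<in> tile k" "i - t' \<in> tile k'" for i t k t' k'
    using that covers_iff by auto
  show "tiling_point \<kappa> (i + c) = k"
    if "(t, k) \<in> range (\<lambda>j. (j * int M - c, \<kappa> j))" "i - t \<in> tile k" for i t k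
    using that covers_iff by (auto simp: tiling_point_def)
qed (use assms in \<open>auto simp: linked_def\<close>)

lemma tiling_point_block: "tiling_point \<kappa> (j * int M) = \<kappa> j"
  using M_ge_4 by (simp add: tiling_point_def tile_index_def)

lemma inj_tiling_point: "inj tiling_point"
proof (rule injI, rule ext)
  fix \<kappa> \<kappa>' j
  assume "tiling_point \<kappa> = tiling_point \<kappa>'"
  then show "\<kappa> j = \<kappa>' j"
    using tiling_point_block by metis
qed

lemma tile_index_add_block: "tile_index \<kappa> (m + int M) = tile_index (shift \<kappa>) m + 1"
proof -
  have "(m + int M) div int M = m div int M + 1" "(m + int M) mod int M = m mod int M"
    using M_ge_4 by simp_all
  then show ?thesis
    by (simp add: tile_index_def shift_def)
qed

lemma tiling_point_shift: "tiling_point (shift \<kappa>) = (shift ^^ M) (tiling_point \<kappa>)"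
proof
  fix m
  have "tiling_point \<kappa> (m + int M) = shift \<kappa> (tile_index (shift \<kappa>) m)"
    by (simp add: tiling_point_def tile_index_add_block shift_def)
  then show "tiling_point (shift \<kappa>) m = (shift ^^ M) (tiling_point \<kappa>) m"
    by (simp add: funpow_shift tiling_point_def)
qed

lemma continuous_map_tiling_point: "continuous_map shift_top shift_top tiling_point"
proof (rule continuous_map_shift_top_local)
  fix m
  show "\<exists>D. finite D \<and> (\<forall>\<kappa> \<kappa>'. (\<forall>d\<in>D. \<kappa>' d = \<kappa> d) \<longrightarrow> tiling_point \<kappa>' m = tiling_point \<kappa> m)"
    by (intro exI[of _ "{m div int M - 1, m div int M}"]) (simp add: tiling_point_def tile_index_def)
qed

end

locale hole_peg_tiling = hole_peg_tiles +
  fixes J :: "(int \<times> nat) set" and y :: "int \<Rightarrow> nat"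
  assumes tile_labels: "\<And>t k. (t, k) \<in> J \<Longrightarrow> k \<in> {1..K}"
    and tiles_cover: "\<And>i. \<exists>t k. (t, k) \<in> J \<and> i - t \<in> tile k"
    and tiles_disjoint: "\<And>i t k t' k'. (t, k) \<in> J \<Longrightarrow> (t', k') \<in> J \<Longrightarrow>
          i - t \<in> tile k \<Longrightarrow> i - t' \<in> tile k' \<Longrightarrow> (t, k) = (t', k')"
    and tile_point: "\<And>i t k. (t, k) \<in> J \<Longrightarrow> i - t \<in> tile k \<Longrightarrow> y i = k"
begin

lemma tile_starts_apart:
  assumes "(t, k) \<in> J" "(s, k') \<in> J" "t < s" "s < t + int M"
  shows False
proof (cases "s - t = 2 + int (a k)")
  case True
  then have "s + 1 - t \<in> tile k" "s + 1 - s \<in> tile k'"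
    using tile_low[of "s + 1 - t" k] hole_bound[of k] one_in_tile by simp_all
  then show False
    using tiles_disjoint[OF assms(1,2)] assms(3) by blast
next
  case False
  then have "s - t \<in> tile k" "s - s \<in> tile k'"
    using tile_low assms(3,4) zero_in_tile by simp_all
  then show False
    using tiles_disjoint[OF assms(1,2)] assms(3) by blast
qed

lemma next_tile:
  assumes "(t, k) \<in> J"
  obtains k' where "(t + int M, k') \<in> J"
proof -
  obtain s k'' where s: "(s, k'') \<in> J" "t + int M - s \<in> tile k''"
    using tiles_cover by blast
  consider "s = t + int M" | "s = t" | "t < s \<and> s < t + int M" | "s < t"
    using tile_bounds[OF s(2)] by linarith
  then show ?thesis
  proof cases
    case 1
    then show ?thesis using s(1) that by blast
  next
    case 2
    then show ?thesis using s(2) tile_high[of "int M" k''] by simp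
  next
    case 3
    then show ?thesis using tile_starts_apart[OF assms s(1)] by blast
  next
    case 4
    then have "t - s = 2 + int (b k'')"
      using s(2) tile_high[of "t + int M - s" k''] by simp
    then show ?thesis
      using tile_starts_apart[OF s(1) assms] 4 peg_bound[of k''] by simp
  qed
qed

lemma next_tile_linked:
  assumes "(t, k) \<in> J" "(t + int M, k') \<in> J"
  shows "b k = a k'"
proof (rule ccontr)
  let ?i = "t + int M + 2 + int (b k)"
  assume "b k \<noteq> a k'"
  then have "?i - t \<in> tile k" "?i - (t + int M) \<in> tile k'"
    using tile_high tile_low peg_bound[of k] by auto
  then have "(t, k) = (t + int M, k')"
    by (rule tiles_disjoint[OF assms])
  then show False
    using M_ge_4 by simp
qed

lemma tile_iterate:
  assumes "(t, k) \<in> J"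
  shows "\<exists>k'. (t + int n * int M, k') \<in> J"
proof (induction n)
  case 0
  then show ?case using assms by auto
next
  case (Suc n)
  then obtain k' where "(t + int n * int M, k') \<in> J"
    by blast
  then obtain k'' where "(t + int n * int M + int M, k'') \<in> J"
    by (rule next_tile)
  then show ?case
    by (auto simp: algebra_simps)
qed

lemma tile_starts_cong:
  assumes "(t, k) \<in> J" "(s, k') \<in> J"
  shows "s mod int M = t mod int M"
proof -
  have "s mod int M = t mod int M" if t: "(t, k) \<in> J" and s: "(s, k') \<in> J" and "t \<le> s"
    for t s k k'
  proof -
    define n where "n = nat ((s - t) div int M)"
    have n: "int n * int M + (s - t) mod int M = s - t"
      using \<open>t \<le> s\<close> M_ge_4 by (simp add: n_def div_int_pos_iff)
    obtain k'' where k'': "(t + int n * int M, k'') \<in> J"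
      using tile_iterate[OF t] by blast
    have "0 \<le> (s - t) mod int M" "(s - t) mod int M < int M"
      using M_ge_4 by simp_all
    then have "s = t + int n * int M"
      using tile_starts_apart[OF k'' s] n by fastforce
    then show ?thesis by simp
  qed
  then show ?thesis
    using assms by (metis linear)
qed

lemma tile_at_cong:
  assumes "(t, k) \<in> J" "s mod int M = t mod int M"
  obtains k' where "(s, k') \<in> J"
proof -
  obtain u k'' where u: "(u, k'') \<in> J" "s - u \<in> tile k''"
    using tiles_cover by blast
  have "s mod int M = u mod int M"
    using tile_starts_cong[OF assms(1) u(1)] assms(2) by simp
  then have "int M dvd s - u"
    by (simp add: mod_eq_dvd_iff)
  then obtain d where d: "s - u = d * int M"
    by (metis dvdE mult.commute)
  then have "d = 0 \<or> d = 1"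
    using offset_within_two_blocks[of 0 "int M" d] tile_bounds[OF u(2)] M_ge_4 by simp
  moreover have "s - u \<noteq> int M"
    using u(2) tile_high[of "int M"] by auto
  ultimately have "u = s"
    using d by auto
  then show ?thesis
    using u(1) that by blast
qed

lemma tile_starts_residue_class:
  obtains c where "c < M" "\<And>j. \<exists>k. (j * int M - int c, k) \<in> J"
proof -
  obtain t k where t: "(t, k) \<in> J"
    using tiles_cover by blast
  define c where "c = nat ((- t) mod int M)"
  have c: "int c = - t - (- t) div int M * int M"
    using M_ge_4 by (simp add: c_def minus_div_mult_eq_mod)
  have "\<exists>k. (j * int M - int c, k) \<in> J" for j
  proof -
    have "j * int M - int c - t = (j + (- t) div int M) * int M"
      using c by (simp add: algebra_simps)
    then have "(j * int M - int c) mod int M = t mod int M"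
      by (simp add: mod_eq_dvd_iff)
    then show ?thesis
      by (metis tile_at_cong[OF t])
  qed
  moreover have "c < M"
    using M_ge_4 by (simp add: c_def nat_less_iff)
  ultimately show ?thesis
    using that by blast
qed

lemma tiling_point_translate:
  obtains \<kappa> c where "linked K a b \<kappa>" "c < M" "y = (\<lambda>n. tiling_point \<kappa> (n + int c))"
proof -
  obtain c where "c < M" and residue_class: "\<And>j. \<exists>k. (j * int M - int c, k) \<in> J"
    using tile_starts_residue_class by blast
  define \<kappa> where "\<kappa> j = y (j * int M - int c)" for j
  have block_tile: "(j * int M - int c, \<kappa> j) \<in> J" for j
  proof -
    obtain k where k: "(j * int M - int c, k) \<in> J"
      using residue_class by blast
    moreover have "y (j * int M - int c) = k"
      using tile_point[OF k] zero_in_tile by simp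
    ultimately show ?thesis
      by (simp add: \<kappa>_def)
  qed
  have "linked K a b \<kappa>"
    unfolding linked_def
  proof
    fix j
    have "(j * int M - int c + int M, \<kappa> (j + 1)) \<in> J"
      using block_tile[of "j + 1"] by (simp add: algebra_simps)
    then show "\<kappa> j \<in> {1..K} \<and> b (\<kappa> j) = a (\<kappa> (j + 1))"
      using tile_labels[OF block_tile] next_tile_linked[OF block_tile] by simp
  qed
  moreover have "y n = tiling_point \<kappa> (n + int c)" for n
  proof -
    let ?j = "tile_index \<kappa> (n + int c)"
    have "n - (?j * int M - int c) \<in> tile (\<kappa> ?j)"
      using tile_covers_iff[OF \<open>linked K a b \<kappa>\<close>, of "n + int c" ?j] by (simp add: algebra_simps)
    then show ?thesis
      using tile_point[OF block_tile] by (simp add: tiling_point_def)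
  qed
  ultimately show ?thesis
    using that \<open>c < M\<close> by blast
qed

end

context hole_peg_tiles
begin

lemma tiling_points_cases:
  assumes "y \<in> tiling_points K tile"
  obtains \<kappa> c where "linked K a b \<kappa>" "c < M" "y = (\<lambda>n. tiling_point \<kappa> (n + int c))"
proof -
  obtain J where labels: "\<And>t k. (t, k) \<in> J \<Longrightarrow> k \<in> {1..K}"
    and cover: "\<And>i. \<exists>t k. (t, k) \<in> J \<and> i - t \<in> tile k"
    and disjoint: "\<And>i t k t' k'. (t, k) \<in> J \<Longrightarrow> (t', k') \<in> J \<Longrightarrow> i - t \<in> tile k \<Longrightarrow>
          i - t' \<in> tile k' \<Longrightarrow> (t, k) = (t', k')"
    and point: "\<And>i t k. (t, k) \<in> J \<Longrightarrow> i - t \<in> tile k \<Longrightarrow> y i = k"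
    using tiling_pointsE[OF assms] by blast
  interpret hole_peg_tiling M K a b J y
    by unfold_locales (fact labels cover disjoint point)+
  show ?thesis
    using tiling_point_translate that by blast
qed

lemma tiling_points_eq:
  "tiling_points K tile = (\<Union>c<M. (shift ^^ c) ` tiling_point ` {\<kappa>. linked K a b \<kappa>})"
proof
  show "tiling_points K tile \<subseteq> (\<Union>c<M. (shift ^^ c) ` tiling_point ` {\<kappa>. linked K a b \<kappa>})"
  proof
    fix y
    assume "y \<in> tiling_points K tile"
    then obtain \<kappa> c where "linked K a b \<kappa>" "c < M" "y = (shift ^^ c) (tiling_point \<kappa>)"
      unfolding funpow_shift by (rule tiling_points_cases)
    then show "y \<in> (\<Union>c<M. (shift ^^ c) ` tiling_point ` {\<kappa>. linked K a b \<kappa>})"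
      by blast
  qed
  show "(\<Union>c<M. (shift ^^ c) ` tiling_point ` {\<kappa>. linked K a b \<kappa>}) \<subseteq> tiling_points K tile"
    by (auto simp: funpow_shift intro: tiling_point_in_tiling_points)
qed

end

definition window :: "nat \<Rightarrow> (int \<Rightarrow> 'a) \<Rightarrow> int \<Rightarrow> 'a list" where
  "window n x i = map (\<lambda>r. x (i + int r)) [0..<n]"

lemma length_window [simp]: "length (window n x i) = n"
  by (simp add: window_def)

lemma nth_window [simp]: "r < n \<Longrightarrow> window n x i ! r = x (i + int r)"
  by (simp add: window_def)

lemma take_window: "m \<le> n \<Longrightarrow> take m (window n x i) = window m x i"
  by (simp add: window_def take_map)

lemma drop_window: "drop m (window n x i) = window (n - m) x (i + int m)"
  by (rule nth_equalityI) (simp_all add: add.assoc)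

lemma window_cong: "(\<And>r. r < n \<Longrightarrow> x (i + int r) = y (i + int r)) \<Longrightarrow> window n x i = window n y i"
  by (simp add: window_def)

lemma window_funpow_shift: "window n ((shift ^^ m) x) i = window n x (i + int m)"
  by (simp add: window_def funpow_shift algebra_simps)

lemma occurs_at_iff_window: "occurs_at w x i \<longleftrightarrow> window (length w) x i = w"
  by (auto simp: occurs_at_def list_eq_iff_nth_eq)

lemma occurs_at_funpow_shift: "occurs_at w ((shift ^^ n) x) i = occurs_at w x (i + int n)"
  by (simp add: occurs_at_iff_window window_funpow_shift)

lemma closedin_forbid_shift: "closedin shift_top (forbid_shift F)"
proof -
  have "openin shift_top {x. occurs_at f x p}" for f p
    by (rule openin_shift_top_local[of "{p..<p + int (length f)}"]) (auto simp: occurs_at_def)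
  then have "openin shift_top (\<Union>f\<in>F. \<Union>p. {x. occurs_at f x p})"
    by blast
  moreover have "forbid_shift F = UNIV - (\<Union>f\<in>F. \<Union>p. {x. occurs_at f x p})"
    by (auto simp: forbid_shift_def)
  ultimately show ?thesis
    by (simp add: closedin_def Diff_Diff_Int)
qed

lemma funpow_shift_forbid_shift: "(shift ^^ n) ` forbid_shift F = forbid_shift F"
proof
  show "(shift ^^ n) ` forbid_shift F \<subseteq> forbid_shift F"
    by (auto simp: forbid_shift_def occurs_at_funpow_shift)
  show "forbid_shift F \<subseteq> (shift ^^ n) ` forbid_shift F"
  proof
    fix x
    assume x: "x \<in> forbid_shift F"
    define z where "z i = x (i - int n)" for i
    have "(shift ^^ n) z = x"
      by (simp add: funpow_shift z_def)
    moreover have "occurs_at f z p \<longleftrightarrow> occurs_at f x (p - int n)" for f p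
      by (simp add: occurs_at_def z_def algebra_simps)
    then have "z \<in> forbid_shift F"
      using x by (simp add: forbid_shift_def)
    ultimately show "x \<in> (shift ^^ n) ` forbid_shift F"
      by blast
  qed
qed

lemma block_decomposition:
  fixes p :: int
  assumes "0 < M"
  obtains j r where "p = j * int M + int r" "r < M"
proof
  show "p = p div int M * int M + int (nat (p mod int M))"
    using assms by simp
  show "nat (p mod int M) < M"
    using assms by (simp add: nat_less_iff)
qed

lemma windows_inject:
  assumes "0 < M" "M \<le> n" "\<And>j. window n x (j * int M) = window n y (j * int M)"
  shows "x = y"
proof
  fix p
  obtain j r where "p = j * int M + int r" "r < M"
    using block_decomposition[OF assms(1)] .
  then show "x p = y p"
    using arg_cong[OF assms(3)[of j], of "\<lambda>w. w ! r"] assms(2) by simp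
qed

lemma windows_glue:
  assumes "0 < M" "L \<le> M" and len: "\<And>j. length (w j) = M + L"
    and overlap: "\<And>j. drop M (w j) = take L (w (j + 1))"
  shows "\<exists>x. \<forall>j. window (M + L) x (j * int M) = w j"
proof (intro exI allI)
  define x where "x p = w (p div int M) ! nat (p mod int M)" for p
  have x_block: "x (j * int M + int r) = w j ! r" if "r < M" for j r
    using that by (simp add: x_def)
  fix j
  show "window (M + L) x (j * int M) = w j"
  proof (rule nth_equalityI)
    fix r
    assume "r < length (window (M + L) x (j * int M))"
    then have "r < M + L" by simp
    show "window (M + L) x (j * int M) ! r = w j ! r"
    proof (cases "r < M")
      case True
      then show ?thesis using x_block by simp
    next
      case False
      then have "j * int M + int r = (j + 1) * int M + int (r - M)" "r - M < M" "r - M < L"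
        using \<open>r < M + L\<close> assms(2) by (simp_all add: algebra_simps)
      then have "x (j * int M + int r) = take L (w (j + 1)) ! (r - M)"
        using x_block by simp
      also have "\<dots> = w j ! r"
        using False len[of j] by (simp flip: overlap)
      finally show ?thesis
        using \<open>r < M + L\<close> by simp
    qed
  qed (simp add: len)
qed

locale sft_blocks =
  fixes F :: "'a::finite list set" and L M :: nat
  assumes forbidden_length: "\<And>f. f \<in> F \<Longrightarrow> length f \<le> L"
    and L_le_M: "L \<le> M"
    and codes_fit: "CARD('a) ^ L + 4 \<le> M"
begin

lemma M_pos: "0 < M"
  using codes_fit by simp

definition admissible :: "'a list \<Rightarrow> bool" where
  "admissible w \<longleftrightarrow> (\<forall>r<M. \<forall>f\<in>F. take (length f) (drop r w) \<noteq> f)"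

lemma admissible_window:
  "admissible (window (M + L) x i) \<longleftrightarrow> (\<forall>r<M. \<forall>f\<in>F. \<not> occurs_at f x (i + int r))"
proof -
  have "take (length f) (drop r (window (M + L) x i)) = window (length f) x (i + int r)"
    if "r < M" "f \<in> F" for r f
    using that forbidden_length[of f] by (simp add: drop_window take_window)
  then show ?thesis
    by (auto simp: admissible_def occurs_at_iff_window)
qed

lemma forbid_shift_iff_admissible:
  "x \<in> forbid_shift F \<longleftrightarrow> (\<forall>j. admissible (window (M + L) x (j * int M)))"
proof -
  have "(\<forall>p. \<not> occurs_at f x p) \<longleftrightarrow> (\<forall>j. \<forall>r<M. \<not> occurs_at f x (j * int M + int r))" for f
    by (metis block_decomposition[OF M_pos])
  then show ?thesis
    by (auto simp: forbid_shift_def admissible_window)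
qed

definition interface_code :: "'a list \<Rightarrow> nat" where
  "interface_code = (SOME c. bij_betw c {u. length u = L} {0..<CARD('a) ^ L})"

lemma bij_interface_code: "bij_betw interface_code {u. length u = L} {0..<CARD('a) ^ L}"
proof -
  have "finite {u :: 'a list. length u = L}" "card {u :: 'a list. length u = L} = CARD('a) ^ L"
    using finite_lists_length_eq[of "UNIV :: 'a set" L] card_lists_length_eq[of "UNIV :: 'a set" L]
    by simp_all
  then show ?thesis
    unfolding interface_code_def by (metis (no_types) someI_ex ex_bij_betw_finite_nat)
qed

definition K :: nat where
  "K = CARD('a) ^ (M + L)"

definition block :: "nat \<Rightarrow> 'a list" where
  "block = (SOME e. bij_betw e {1..K} {w. length w = M + L})"

lemma bij_block: "bij_betw block {1..K} {w. length w = M + L}"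
proof -
  have "finite {w :: 'a list. length w = M + L}" "card {w :: 'a list. length w = M + L} = K"
    using finite_lists_length_eq[of "UNIV :: 'a set" "M + L"]
      card_lists_length_eq[of "UNIV :: 'a set" "M + L"]
    by (simp_all add: K_def)
  then show ?thesis
    unfolding block_def by (metis (no_types) someI_ex ex_bij_betw_nat_finite_1)
qed

definition label :: "'a list \<Rightarrow> nat" where
  "label = inv_into {1..K} block"

lemma label_in: "length w = M + L \<Longrightarrow> label w \<in> {1..K}"
  using bij_betw_inv_into[OF bij_block] by (auto simp: label_def bij_betw_def)

lemma block_label: "length w = M + L \<Longrightarrow> block (label w) = w"
  using bij_betw_inv_into_right[OF bij_block] by (simp add: label_def)

lemma label_block: "k \<in> {1..K} \<Longrightarrow> label (block k) = k"
  using bij_betw_inv_into_left[OF bij_block] by (simp add: label_def)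

lemma length_block: "k \<in> {1..K} \<Longrightarrow> length (block k) = M + L"
  using bij_block by (auto simp: bij_betw_def)

definition entry_code :: "nat \<Rightarrow> nat" where
  "entry_code k = (if k \<in> {1..K} then interface_code (take L (block k)) else 0)"

text \<open>Blocks containing a forbidden word get the exit code \<open>CARD('a) ^ L\<close>, which is no entry
  code, so their tiles never fit in a tiling.\<close>
definition exit_code :: "nat \<Rightarrow> nat" where
  "exit_code k = (if k \<in> {1..K} \<and> admissible (block k) then interface_code (drop M (block k))
                  else CARD('a) ^ L)"

lemma interface_code_less: "length u = L \<Longrightarrow> interface_code u < CARD('a) ^ L"
  using bij_interface_code by (auto simp: bij_betw_def)

lemma entry_code_less: "entry_code k < CARD('a) ^ L"
  by (simp add: entry_code_def length_block interface_code_less)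

lemma exit_code_le: "exit_code k \<le> CARD('a) ^ L"
  by (simp add: exit_code_def length_block interface_code_less less_imp_le)

sublocale hole_peg_tiles M K entry_code exit_code
proof
  show "entry_code k + 4 \<le> M" for k
    using entry_code_less[of k] codes_fit by linarith
  show "exit_code k + 4 \<le> M" for k
    using exit_code_le[of k] codes_fit by linarith
qed

lemma prototile_collection_tiles: "prototile_collection K tile"
  by (simp add: prototile_collection_def prototile_tile K_def)

definition block_code :: "(int \<Rightarrow> 'a) \<Rightarrow> int \<Rightarrow> nat" where
  "block_code x j = label (window (M + L) x (j * int M))"

lemma continuous_map_block_code: "continuous_map shift_top shift_top block_code"
proof (rule continuous_map_shift_top_local)
  fix j
  show "\<exists>D. finite D \<and> (\<forall>x y. (\<forall>d\<in>D. y d = x d) \<longrightarrow> block_code y j = block_code x j)"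
    by (intro exI[of _ "{j * int M..<j * int M + int (M + L)}"])
       (auto simp: block_code_def intro!: arg_cong[of _ _ label] window_cong)
qed

lemma inj_block_code: "inj block_code"
proof (rule injI)
  fix x y
  assume "block_code x = block_code y"
  then have "window (M + L) x (j * int M) = window (M + L) y (j * int M)" for j
    unfolding block_code_def by (metis block_label length_window)
  then show "x = y"
    by (intro windows_inject[OF M_pos le_add1])
qed

lemma block_code_shift: "block_code ((shift ^^ M) x) = shift (block_code x)"
  by (rule ext) (simp add: block_code_def shift_def window_funpow_shift algebra_simps)

lemma linked_block_code:
  assumes "x \<in> forbid_shift F"
  shows "linked K entry_code exit_code (block_code x)"
  unfolding linked_def
proof
  fix j
  let ?w = "\<lambda>j. window (M + L) x (j * int M)"
  have labels: "block_code x i \<in> {1..K}" for i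
    unfolding block_code_def by (rule label_in) simp
  have blocks: "block (block_code x i) = ?w i" for i
    by (simp add: block_code_def block_label)
  have "exit_code (block_code x j) = interface_code (drop M (?w j))"
    using labels[of j] assms forbid_shift_iff_admissible by (simp add: exit_code_def blocks)
  also have "drop M (?w j) = take L (?w (j + 1))"
    by (simp add: drop_window take_window algebra_simps)
  also have "interface_code \<dots> = entry_code (block_code x (j + 1))"
    using labels[of "j + 1"] by (simp add: entry_code_def blocks)
  finally show "block_code x j \<in> {1..K} \<and> exit_code (block_code x j) = entry_code (block_code x (j + 1))"
    using labels by simp
qed

lemma block_code_surj:
  assumes "linked K entry_code exit_code \<kappa>"
  obtains x where "x \<in> forbid_shift F" "block_code x = \<kappa>"
proof -
  define w where "w j = block (\<kappa> j)" for j
  have \<kappa>: "\<kappa> j \<in> {1..K}" "exit_code (\<kappa> j) = entry_code (\<kappa> (j + 1))" for j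
    using assms by (simp_all add: linked_def)
  have len: "length (w j) = M + L" for j
    using \<kappa>(1) by (simp add: w_def length_block)
  have adm: "admissible (w j)" for j
    using \<kappa>(1)[of j] \<kappa>(2)[of j] entry_code_less[of "\<kappa> (j + 1)"]
    by (auto simp: exit_code_def w_def split: if_splits)
  have overlap: "drop M (w j) = take L (w (j + 1))" for j
  proof -
    have "interface_code (drop M (w j)) = interface_code (take L (w (j + 1)))"
      using \<kappa>[of j] \<kappa>(1)[of "j + 1"] adm[of j] by (simp add: w_def entry_code_def exit_code_def)
    then show ?thesis
      using bij_interface_code len[of j] len[of "j + 1"] by (simp add: bij_betw_def inj_on_def)
  qed
  have "\<exists>x. \<forall>j. window (M + L) x (j * int M) = w j"
    using M_pos L_le_M len overlap by (rule windows_glue)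
  then obtain x where x: "\<And>j. window (M + L) x (j * int M) = w j"
    by blast
  show ?thesis
  proof
    show "x \<in> forbid_shift F"
      using adm x by (simp add: forbid_shift_iff_admissible)
    show "block_code x = \<kappa>"
      using \<kappa>(1) x by (simp add: block_code_def w_def label_block fun_eq_iff)
  qed
qed

lemma block_code_image: "block_code ` forbid_shift F = {\<kappa>. linked K entry_code exit_code \<kappa>}"
proof
  show "block_code ` forbid_shift F \<subseteq> {\<kappa>. linked K entry_code exit_code \<kappa>}"
    using linked_block_code by blast
  show "{\<kappa>. linked K entry_code exit_code \<kappa>} \<subseteq> block_code ` forbid_shift F"
  proof
    fix \<kappa>
    assume "\<kappa> \<in> {\<kappa>. linked K entry_code exit_code \<kappa>}"
    then obtain x where "x \<in> forbid_shift F" "block_code x = \<kappa>"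
      by (auto elim: block_code_surj)
    then show "\<kappa> \<in> block_code ` forbid_shift F"
      by blast
  qed
qed

definition tiling_code :: "(int \<Rightarrow> 'a) \<Rightarrow> int \<Rightarrow> nat" where
  "tiling_code = tiling_point \<circ> block_code"

lemma continuous_map_tiling_code: "continuous_map shift_top shift_top tiling_code"
  unfolding tiling_code_def
  by (rule continuous_map_compose[OF continuous_map_block_code continuous_map_tiling_point])

lemma inj_tiling_code: "inj tiling_code"
  unfolding tiling_code_def by (rule inj_compose[OF inj_tiling_point inj_block_code])

lemma tiling_code_shift: "tiling_code ((shift ^^ M) x) = (shift ^^ M) (tiling_code x)"
  by (simp add: tiling_code_def block_code_shift tiling_point_shift)

lemma tiling_points_eq_tiling_code_images:
  "tiling_points K tile = (\<Union>i<M. (shift ^^ i) ` tiling_code ` forbid_shift F)"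
  by (simp add: tiling_points_eq tiling_code_def image_comp flip: block_code_image)

end

theorem mainTheorem1:
  fixes \<Sigma> :: "(int \<Rightarrow> 'a::finite) set"
  assumes "is_SFT \<Sigma>"
  shows "\<exists>(m::nat) (K::nat) (P::nat \<Rightarrow> int set) (Ts::nat \<Rightarrow> (int \<Rightarrow> nat) set).
           m > 0 \<and> prototile_collection K P \<and>
           tiling_points K P = (\<Union>i<m. Ts i) \<and>
           (\<forall>i<m. closedin shift_top (Ts i)) \<and>
           (\<forall>i<m. shift ` Ts i = Ts (Suc i mod m)) \<and>
           (\<forall>i<m. \<exists>h. homeomorphic_map (subtopology shift_top \<Sigma>)
                                          (subtopology shift_top (Ts i)) h \<and>
                      (\<forall>x\<in>\<Sigma>. h ((shift ^^ m) x) = (shift ^^ m) (h x)))"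
proof -
  obtain F where "finite F" and \<Sigma>: "\<Sigma> = forbid_shift F"
    using assms unfolding is_SFT_def by blast
  define L where "L = Max (insert 0 (length ` F))"
  define M where "M = CARD('a) ^ L + L + 4"
  interpret sft_blocks F L M
  proof
    show "length f \<le> L" if "f \<in> F" for f
      unfolding L_def by (rule Max_ge) (use \<open>finite F\<close> that in auto)
  qed (simp_all add: M_def)
  note pieces = shift_images_cyclic_conjugate[OF closedin_forbid_shift funpow_shift_forbid_shift
      continuous_map_tiling_code inj_tiling_code tiling_code_shift]
  show ?thesis
    unfolding \<Sigma>
  proof (rule exI[of _ M], rule exI[of _ K], rule exI[of _ tile],
      rule exI[of _ "\<lambda>i. (shift ^^ i) ` tiling_code ` forbid_shift F"])
  qed (use M_pos in \<open>simp add: pieces tiling_points_eq_tiling_code_images prototile_collection_tiles\<close>)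
qed

end
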